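(* For every integer $n\geq 3$, there is a partition of $\mathbb{R}^n$ into $2^{\aleph_0}$ pairwise disjoint subsets, each of which is arcwise connected and dense in $\mathbb{R}^n$.
   Context: $\mathbb{R}^n$ carries its usual Euclidean topology. *)

theory Defs
  imports "HOL-Analysis.Analysis" "HOL-Library.Equipollence"
begin

definition arcwise_connected :: "'a::topological_space set \<Rightarrow> bool" where
  "arcwise_connected S \<longleftrightarrow>
     (\<forall>x\<in>S. \<forall>y\<in>S. x \<noteq> y \<longrightarrow>
        (\<exists>g. arc g \<and> path_image g \<subseteq> S \<and> pathstart g = x \<and> pathfinish g = y))"

end

theory Submission
  imports Defs
begin

(* Fix three distinct coordinate indices i, j, k and a function g :: real => real,
   and split R^n into the fibres of  F v = v$k - v$j * g (v$i),  i.e. the sets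
     L t = {v. v$k = t + v$j * g (v$i)}      (t real).
   (1) Fibres of any surjection form a partition into nonempty blocks indexed bijectively by
       the codomain; F is surjective, so the L t partition R^n into continuum many pieces.
   (2) Every L t is path connected, whatever g is: moving v$j linearly to 0 (and v$k to t)
       keeps us inside L t, and the points with v$j = 0, v$k = t form a convex subset of L t.
       In R^n path connectedness coincides with arcwise connectedness.
   (3) If the graph of g is dense in R^2, every L t is dense in R^n.
   (4) Such a g exists: for irrational a, send q + c*a (q, c rational) to c, and all other
       reals to 0; its graph meets every open box because Q + Q a is dense and c ranges over Q. *)

text \<open>In complete normed spaces every path can be refined to an arc.\<close>

lemma arcwise_connected_iff_path_connected:
  fixes S :: "'a::{complete_space,real_normed_vector} set"
  shows "arcwise_connected S \<longleftrightarrow> path_connected S"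
  unfolding arcwise_connected_def by (rule path_connected_arcwise[symmetric])

lemma fibres_partition:
  fixes F :: "'a \<Rightarrow> 'b"
  assumes "surj F"
  defines "P \<equiv> (\<lambda>t. F -` {t}) ` UNIV"
  shows "\<Union>P = UNIV" and "\<forall>A\<in>P. \<forall>B\<in>P. A \<noteq> B \<longrightarrow> A \<inter> B = {}"
    and "\<forall>A\<in>P. A \<noteq> {}" and "P \<approx> (UNIV :: 'b set)"
proof -
  show "\<Union>P = UNIV" and "\<forall>A\<in>P. \<forall>B\<in>P. A \<noteq> B \<longrightarrow> A \<inter> B = {}"
    unfolding P_def by auto
  have preimage: "\<exists>v. F v = t" for t
    using assms by (metis surjD)
  then show "\<forall>A\<in>P. A \<noteq> {}" unfolding P_def by blast
  have "inj (\<lambda>t. F -` {t})"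
  proof (rule injI)
    fix s t assume eq: "F -` {s} = F -` {t}"
    obtain v where "F v = s" using preimage by blast
    then show "s = t" using eq by blast
  qed
  then show "P \<approx> (UNIV :: 'b set)"
    unfolding P_def by (rule inj_on_image_eqpoll_self)
qed

definition level_set :: "(real \<Rightarrow> real) \<Rightarrow> 'n \<Rightarrow> 'n \<Rightarrow> 'n \<Rightarrow> real \<Rightarrow> (real^'n) set" where
  "level_set g i j k t = {v. v$k = t + v$j * g (v$i)}"

lemma level_set_fibre:
  "level_set g i j k t = (\<lambda>v. v$k - v$j * g (v$i)) -` {t}"
  unfolding level_set_def by auto

lemma level_set_function_surj:
  fixes i j k :: "'n::finite"
  assumes "j \<noteq> k"
  shows "surj (\<lambda>v::real^'n. v$k - v$j * g (v$i))"
  using assms by (intro surjI[of _ "\<lambda>t. \<chi> l. if l = k then t else 0"]) simp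

lemma level_set_segment_to_base:
  assumes ij: "i \<noteq> j" and ik: "i \<noteq> k" and jk: "j \<noteq> k" and v: "v \<in> level_set g i j k t"
  shows "closed_segment v (\<chi> l. if l = j then 0 else if l = k then t else v$l)
           \<subseteq> level_set g i j k t"
proof
  fix z assume "z \<in> closed_segment v (\<chi> l. if l = j then 0 else if l = k then t else v$l)"
  then obtain u where z: "z = (1 - u) *\<^sub>R v + u *\<^sub>R (\<chi> l. if l = j then 0 else if l = k then t else v$l)"
    unfolding closed_segment_def by auto
  have zi: "z$i = v$i" unfolding z using ij ik by (simp add: algebra_simps)
  have zj: "z$j = (1 - u) * v$j" unfolding z by simp
  have zk: "z$k = (1 - u) * v$k + u * t" unfolding z using jk by simp
  have vk: "v$k = t + v$j * g (v$i)" using v by (simp add: level_set_def)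
  have "z$k = t + ((1 - u) * v$j) * g (v$i)" unfolding zk vk by (simp add: algebra_simps)
  then show "z \<in> level_set g i j k t"
    unfolding level_set_def by (simp only: mem_Collect_eq zi zj)
qed

lemma level_set_base_segment:
  assumes "x$j = 0" "x$k = t" "y$j = 0" "y$k = t"
  shows "closed_segment x y \<subseteq> level_set g i j k t"
proof
  fix z assume "z \<in> closed_segment x y"
  then obtain u where z: "z = (1 - u) *\<^sub>R x + u *\<^sub>R y" unfolding closed_segment_def by auto
  have "z$j = 0" "z$k = t" unfolding z using assms by (simp_all add: algebra_simps)
  then show "z \<in> level_set g i j k t" unfolding level_set_def by simp
qed

lemma path_component_of_segment:
  fixes x y :: "'a::real_normed_vector"
  assumes "closed_segment x y \<subseteq> S"
  shows "path_component S x y"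
  unfolding path_component_def
  by (rule exI[of _ "linepath x y"]) (use assms in auto)

lemma level_set_path_connected:
  assumes ij: "i \<noteq> j" and ik: "i \<noteq> k" and jk: "j \<noteq> k"
  shows "path_connected (level_set g i j k t)"
  unfolding path_connected_component
proof (intro ballI)
  fix v w assume v: "v \<in> level_set g i j k t" and w: "w \<in> level_set g i j k t"
  define base :: "real^'a \<Rightarrow> real^'a"
    where "base x = (\<chi> l. if l = j then 0 else if l = k then t else x$l)" for x
  have v_base: "path_component (level_set g i j k t) v (base v)"
    unfolding base_def by (rule path_component_of_segment, rule level_set_segment_to_base[OF assms v])
  have w_base: "path_component (level_set g i j k t) w (base w)"
    unfolding base_def by (rule path_component_of_segment, rule level_set_segment_to_base[OF assms w])
  have base_base: "path_component (level_set g i j k t) (base v) (base w)"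
    by (rule path_component_of_segment, rule level_set_base_segment) (use jk in \<open>simp_all add: base_def\<close>)
  show "path_component (level_set g i j k t) v w"
    using v_base base_base w_base path_component_trans path_component_sym by metis
qed

definition dense_graph :: "(real \<Rightarrow> real) \<Rightarrow> bool" where
  "dense_graph g \<longleftrightarrow> (\<forall>x c e. e > 0 \<longrightarrow> (\<exists>y. \<bar>y - x\<bar> < e \<and> \<bar>g y - c\<bar> < e))"

text \<open>Step (3): to approach p inside a level set, set the j-th coordinate to a nonzero y0
  near p$j, and pick v$i near p$i where g is close to (p$k - t) / y0.\<close>

lemma level_set_dense:
  fixes g :: "real \<Rightarrow> real"
  assumes ij: "i \<noteq> j" and ik: "i \<noteq> k" and jk: "j \<noteq> k" and g: "dense_graph g"
  shows "closure (level_set g i j k t) = UNIV"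
proof -
  have "p \<in> closure (level_set g i j k t)" for p
    unfolding closure_approachable
  proof (intro allI impI)
    fix e :: real assume e: "e > 0"
    define y0 where "y0 = (if p$j = 0 then e/4 else p$j)"
    have y0: "y0 \<noteq> 0" "\<bar>y0 - p$j\<bar> < e/3" using e by (auto simp: y0_def)
    define d where "d = min (e/3) (e / (3 * \<bar>y0\<bar>))"
    have "d > 0" using e y0 by (simp add: d_def)
    then obtain x where x: "\<bar>x - p$i\<bar> < d" "\<bar>g x - (p$k - t) / y0\<bar> < d"
      using g unfolding dense_graph_def by blast
    have "\<bar>y0\<bar> * \<bar>g x - (p$k - t) / y0\<bar> < \<bar>y0\<bar> * (e / (3 * \<bar>y0\<bar>))"
      using x(2) y0(1) by (intro mult_strict_left_mono) (auto simp: d_def)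
    also have "\<dots> = e/3" using y0 by simp
    also have "\<bar>y0\<bar> * \<bar>g x - (p$k - t) / y0\<bar> = \<bar>t + y0 * g x - p$k\<bar>"
      using y0(1) by (simp add: abs_mult[symmetric] field_simps)
    finally have xk: "\<bar>t + y0 * g x - p$k\<bar> < e/3" .
    define v where "v = p + (x - p$i) *\<^sub>R axis i 1 + (y0 - p$j) *\<^sub>R axis j 1
                          + (t + y0 * g x - p$k) *\<^sub>R axis k (1::real)"
    have vi: "v$i = x" and vj: "v$j = y0" and vk: "v$k = t + y0 * g x"
      using ij ik jk by (auto simp: v_def axis_def)
    have "v \<in> level_set g i j k t" unfolding level_set_def using vi vj vk by simp
    moreover have "dist v p < e"
    proof -
      have "dist v p = norm ((x - p$i) *\<^sub>R axis i 1 + (y0 - p$j) *\<^sub>R axis j 1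
                          + (t + y0 * g x - p$k) *\<^sub>R axis k (1::real))"
        by (simp add: dist_norm v_def add.assoc)
      also have "\<dots> \<le> norm ((x - p$i) *\<^sub>R axis i (1::real)) + norm ((y0 - p$j) *\<^sub>R axis j (1::real))
                          + norm ((t + y0 * g x - p$k) *\<^sub>R axis k (1::real))"
        by (meson add_mono norm_triangle_ineq order_trans order_refl)
      also have "\<dots> = \<bar>x - p$i\<bar> + \<bar>y0 - p$j\<bar> + \<bar>t + y0 * g x - p$k\<bar>" by simp
      also have "\<dots> < e" using x(1) y0(2) xk by (simp add: d_def)
      finally show ?thesis .
    qed
    ultimately show "\<exists>y\<in>level_set g i j k t. dist y p < e" by blast
  qed
  then show ?thesis by auto
qed

text \<open>Step (4).  For irrational a, every real of the form q + c*a with q, c rational determines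
  c uniquely; rational_coeff a reads off this c (and is 0 elsewhere).\<close>

definition rational_coeff :: "real \<Rightarrow> real \<Rightarrow> real" where
  "rational_coeff a x =
     (if \<exists>c\<in>\<rat>. x - c * a \<in> \<rat> then (THE c. c \<in> \<rat> \<and> x - c * a \<in> \<rat>) else 0)"

lemma rational_coeff_eq:
  assumes a: "a \<notin> \<rat>" and c: "c \<in> \<rat>" and q: "q \<in> \<rat>"
  shows "rational_coeff a (q + c * a) = c"
proof -
  have unique: "c' = c" if "c' \<in> \<rat>" "q + c * a - c' * a \<in> \<rat>" for c'
  proof (rule ccontr)
    assume ne: "c' \<noteq> c"
    have "(q + c * a - c' * a) - q \<in> \<rat>" by (rule Rats_diff[OF that(2) q])
    then have "(c - c') * a \<in> \<rat>" by (simp add: algebra_simps)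
    then have "(c - c') * a / (c - c') \<in> \<rat>" by (rule Rats_divide[OF _ Rats_diff[OF c that(1)]])
    then show False using a ne by simp
  qed
  have witness: "c \<in> \<rat> \<and> q + c * a - c * a \<in> \<rat>" using c q by simp
  have "(THE c'. c' \<in> \<rat> \<and> q + c * a - c' * a \<in> \<rat>) = c"
    by (rule the_equality) (use witness unique in auto)
  then show ?thesis unfolding rational_coeff_def using witness by auto
qed

lemma rational_coeff_dense_graph:
  assumes a: "a \<notin> \<rat>"
  shows "dense_graph (rational_coeff a)"
  unfolding dense_graph_def
proof (intro allI impI)
  fix x c e :: real assume e: "e > 0"
  obtain c' where c': "c' \<in> \<rat>" "c - e < c'" "c' < c + e"
    using Rats_dense_in_real[of "c - e" "c + e"] e by auto
  obtain q where q: "q \<in> \<rat>" "x - c' * a - e < q" "q < x - c' * a + e"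
    using Rats_dense_in_real[of "x - c' * a - e" "x - c' * a + e"] e by auto
  have "\<bar>(q + c' * a) - x\<bar> < e" and "\<bar>rational_coeff a (q + c' * a) - c\<bar> < e"
    using q c' rational_coeff_eq[OF a c'(1) q(1)] by auto
  then show "\<exists>y. \<bar>y - x\<bar> < e \<and> \<bar>rational_coeff a y - c\<bar> < e" by blast
qed

lemma exists_irrational: "\<exists>a::real. a \<notin> \<rat>"
  using countable_rat uncountable_UNIV_real by (metis countable_subset subsetI)

theorem corollary1:
  assumes "CARD('n::finite) \<ge> 3"
  shows "\<exists>P :: (real ^ 'n) set set.
           \<Union>P = UNIV \<and>
           (\<forall>A\<in>P. \<forall>B\<in>P. A \<noteq> B \<longrightarrow> A \<inter> B = {}) \<and>
           (\<forall>A\<in>P. A \<noteq> {}) \<and>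
           P \<approx> (UNIV :: real set) \<and>
           (\<forall>A\<in>P. arcwise_connected A \<and> closure A = UNIV)"
proof -
  obtain S :: "'n set" where "card S = 3"
    using ex_card[of 3 "UNIV :: 'n set"] assms by auto
  then obtain i j k :: 'n where ij: "i \<noteq> j" and ik: "i \<noteq> k" and jk: "j \<noteq> k"
    unfolding card_3_iff by blast
  obtain a :: real where "a \<notin> \<rat>" using exists_irrational by blast
  then have g: "dense_graph (rational_coeff a)" by (rule rational_coeff_dense_graph)
  let ?F = "\<lambda>v::real^'n. v$k - v$j * rational_coeff a (v$i)"
  let ?P = "(\<lambda>t. ?F -` {t}) ` UNIV"
  have good: "arcwise_connected A \<and> closure A = UNIV" if "A \<in> ?P" for A
  proof -
    from that obtain t where "A = level_set (rational_coeff a) i j k t"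
      by (auto simp: level_set_fibre)
    then show ?thesis
      using level_set_path_connected[OF ij ik jk] level_set_dense[OF ij ik jk g]
      by (simp add: arcwise_connected_iff_path_connected)
  qed
  have "surj ?F" by (rule level_set_function_surj[OF jk])
  note partition = fibres_partition[OF this]
  show ?thesis
    by (rule exI[of _ ?P]) (use partition good in blast)
qed

end
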